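(* Let $\mathbf{c}\in H_{1,2,2}$ be primitive and let $p$ be a rational prime dividing $N(\mathbf{c})$. Then any left greatest common divisor of $\mathbf{c}$ and $p$ is a prime of $H_{1,2,2}$, and there is a unique primary element among the left greatest common divisors of $\mathbf{c}$ and $p$.
   Context: Let $\mathbf{i},\mathbf{j},\mathbf{k}$ be the standard quaternion units; $\overline{\mathbf{q}}$ is quaternion conjugation and $N(\mathbf{q})=\mathbf{q}\overline{\mathbf{q}}$. $H_{1,2,2}$ is the subring of the quaternions equal to the $\mathbb{Z}$-module generated by $\mathbf{v}_1=1$, $\mathbf{v}_2=\mathbf{i}$, $\mathbf{v}_3=\tfrac12(1+\mathbf{i}+\sqrt2\,\mathbf{j})$, $\mathbf{v}_4=\tfrac12(1+\mathbf{i}+\sqrt2\,\mathbf{k})$; it is norm Euclidean, so any two nonzero elements $\mathbf{a},\mathbf{b}$ have a left greatest common divisor $\mathbf{d}$: $\mathbf{a}=\mathbf{d}\mathbf{a}'$, $\mathbf{b}=\mathbf{d}\mathbf{b}'$ for some $\mathbf{a}',\mathbf{b}'\in H_{1,2,2}$ and $\mathbf{d}=\mathbf{a}\mathbf{x}+\mathbf{b}\mathbf{y}$ for some $\mathbf{x},\mathbf{y}\in H_{1,2,2}$; it is unique up to right multiplication by units (invertible elements). A prime of $H_{1,2,2}$ is a nonzero nonunit $\boldsymbol\pi$ such that any factorization $\boldsymbol\pi=\mathbf{a}\mathbf{b}$ in $H_{1,2,2}$ has $\mathbf{a}$ or $\mathbf{b}$ a unit. Let $I=2(1+\mathbf{i})H_{1,2,2}$.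 An element $\mathbf{q}$ is primary if $\mathbf{q}-1\in I$ or $\mathbf{q}-(1+2\mathbf{v}_3)\in I$. An element $\mathbf{c}=c_1\mathbf{v}_1+c_2\mathbf{v}_2+c_3\mathbf{v}_3+c_4\mathbf{v}_4$ ($c_i\in\mathbb{Z}$) is primitive if it is primary and $\gcd(c_1,c_2,c_3,c_4)=1$. *)

theory Defs
  imports Complex_Main "HOL-Computational_Algebra.Primes"
begin

datatype quat = Quat (qre: real) (qi: real) (qj: real) (qk: real)

instantiation quat :: "{zero, one, plus, minus, uminus, times}"
begin
definition "0 = Quat 0 0 0 0"
definition "1 = Quat 1 0 0 0"
definition "p + q = Quat (qre p + qre q) (qi p + qi q) (qj p + qj q) (qk p + qk q)"
definition "p - q = Quat (qre p - qre q) (qi p - qi q) (qj p - qj q) (qk p - qk q)"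
definition "- q = Quat (- qre q) (- qi q) (- qj q) (- qk q)"
definition "p * q = Quat
   (qre p * qre q - qi p * qi q - qj p * qj q - qk p * qk q)
   (qre p * qi q + qi p * qre q + qj p * qk q - qk p * qj q)
   (qre p * qj q - qi p * qk q + qj p * qre q + qk p * qi q)
   (qre p * qk q + qi p * qj q - qj p * qi q + qk p * qre q)"
instance ..
end

definition qI :: quat where "qI = Quat 0 1 0 0"
definition qJ :: quat where "qJ = Quat 0 0 1 0"
definition qK :: quat where "qK = Quat 0 0 0 1"

definition qreal :: "real \<Rightarrow> quat" where "qreal r = Quat r 0 0 0"

definition qconj :: "quat \<Rightarrow> quat" where
  "qconj q = Quat (qre q) (- qi q) (- qj q) (- qk q)"
definition qN :: "quat \<Rightarrow> quat" where "qN q = q * qconj q"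

definition v1 :: quat where "v1 = 1"
definition v2 :: quat where "v2 = qI"
definition v3 :: quat where "v3 = qreal (1/2) * (1 + qI + qreal (sqrt 2) * qJ)"
definition v4 :: quat where "v4 = qreal (1/2) * (1 + qI + qreal (sqrt 2) * qK)"

definition Hcomb :: "int \<Rightarrow> int \<Rightarrow> int \<Rightarrow> int \<Rightarrow> quat" where
  "Hcomb c1 c2 c3 c4 = qreal (of_int c1) * v1 + qreal (of_int c2) * v2
                     + qreal (of_int c3) * v3 + qreal (of_int c4) * v4"

definition H122 :: "quat set" where
  "H122 = {Hcomb c1 c2 c3 c4 | c1 c2 c3 c4. True}"

definition Hunit :: "quat \<Rightarrow> bool" where
  "Hunit u \<longleftrightarrow> u \<in> H122 \<and> (\<exists>v\<in>H122. u * v = 1 \<and> v * u = 1)"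

definition Hprime :: "quat \<Rightarrow> bool" where
  "Hprime \<pi> \<longleftrightarrow> \<pi> \<in> H122 \<and> \<pi> \<noteq> 0 \<and> \<not> Hunit \<pi> \<and>
     (\<forall>a\<in>H122. \<forall>b\<in>H122. \<pi> = a * b \<longrightarrow> Hunit a \<or> Hunit b)"

definition left_gcd :: "quat \<Rightarrow> quat \<Rightarrow> quat \<Rightarrow> bool" where
  "left_gcd a b d \<longleftrightarrow> d \<in> H122 \<and>
     (\<exists>a'\<in>H122. a = d * a') \<and> (\<exists>b'\<in>H122. b = d * b') \<and>
     (\<exists>x\<in>H122. \<exists>y\<in>H122. d = a * x + b * y)"

definition Iideal :: "quat set" where
  "Iideal = {qreal 2 * (1 + qI) * h | h. h \<in> H122}"

definition primary :: "quat \<Rightarrow> bool" where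
  "primary q \<longleftrightarrow> q \<in> H122 \<and>
     (q - 1 \<in> Iideal \<or> q - (1 + qreal 2 * v3) \<in> Iideal)"

definition primitive :: "quat \<Rightarrow> bool" where
  "primitive c \<longleftrightarrow> primary c \<and>
     (\<exists>c1 c2 c3 c4. c = Hcomb c1 c2 c3 c4 \<and> gcd (gcd c1 c2) (gcd c3 c4) = 1)"

end

(*
  H_{1,2,2} has integral coordinates in the basis v1, v2, v3, v4, in which the norm is the
  integral form a^2 + b^2 + (a + b)(c + d) + c^2 + cd + d^2, and every quaternion lies within
  norm 3/4 of H_{1,2,2}.  Hence left division with remainder works, and an element of least norm
  in cH + pH is a left gcd d of c and p.

  From p = d b' we get N(d) N(b') = p^2, so N(d) is 1, p or p^2.  If N(d) = 1, then
  conj(c) = conj(c) d conj(d) lies in pH, because conj(c) d = N(c) x + p conj(c) y and p divides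
  N(c).  If N(d) = p^2, then b' is a unit and d lies in pH.  Either way c lies in pH, which
  primitivity excludes.  So N(d) = p, and d is prime.

  Two left gcds differ by a unit factor on the right, and the units are the 24 elements of
  norm 1.  Since 4 H_{1,2,2} is contained in I, whether d u is primary depends only on d modulo
  4, and a finite computation shows that an element of odd norm has exactly one primary right
  associate.  N(d) = p is odd because the primary element c has odd norm.
*)

theory Submission
  imports Defs "HOL-Library.Product_Plus"
begin

section \<open>Quaternion arithmetic\<close>

lemma quat_eqI:
  "qre a = qre b \<Longrightarrow> qi a = qi b \<Longrightarrow> qj a = qj b \<Longrightarrow> qk a = qk b \<Longrightarrow> a = b"
  by (cases a; cases b) auto

lemmas quat_arith_defs =
  zero_quat_def one_quat_def plus_quat_def minus_quat_def uminus_quat_def times_quat_def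

instance quat :: ring_1
  by standard (auto intro!: quat_eqI simp: quat_arith_defs algebra_simps)

definition qnorm :: "quat \<Rightarrow> real" where
  "qnorm q = qre q ^ 2 + qi q ^ 2 + qj q ^ 2 + qk q ^ 2"

lemma qreal_mult_commute: "qreal r * q = q * qreal r"
  by (auto intro!: quat_eqI simp: qreal_def quat_arith_defs)

lemma qreal_mult_qreal: "qreal r * qreal s = qreal (r * s)"
  by (auto intro!: quat_eqI simp: qreal_def quat_arith_defs)

lemma qreal_1 [simp]: "qreal 1 = 1"
  by (simp add: qreal_def one_quat_def)

lemma qreal_eq_iff [simp]: "qreal r = qreal s \<longleftrightarrow> r = s"
  by (simp add: qreal_def)

lemma qreal_eq_0_iff [simp]: "qreal r = 0 \<longleftrightarrow> r = 0"
  by (simp add: qreal_def zero_quat_def)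

lemma qconj_mult: "qconj (a * b) = qconj b * qconj a"
  by (auto intro!: quat_eqI simp: qconj_def quat_arith_defs algebra_simps)

lemma qconj_qconj [simp]: "qconj (qconj a) = a"
  by (auto intro!: quat_eqI simp: qconj_def)

lemma qconj_qreal [simp]: "qconj (qreal r) = qreal r"
  by (auto intro!: quat_eqI simp: qconj_def qreal_def)

lemma mult_qconj: "q * qconj q = qreal (qnorm q)"
  by (auto intro!: quat_eqI simp: qconj_def quat_arith_defs qreal_def qnorm_def
      power2_eq_square algebra_simps)

lemma qconj_mult_self: "qconj q * q = qreal (qnorm q)"
  by (auto intro!: quat_eqI simp: qconj_def quat_arith_defs qreal_def qnorm_def
      power2_eq_square algebra_simps)

lemma qN_eq_qreal_qnorm: "qN q = qreal (qnorm q)"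
  by (simp add: qN_def mult_qconj)

lemma qnorm_mult: "qnorm (a * b) = qnorm a * qnorm b"
  by (simp add: qnorm_def quat_arith_defs power2_eq_square algebra_simps)

lemma qnorm_qreal: "qnorm (qreal r) = r ^ 2"
  by (simp add: qnorm_def qreal_def)

lemma qnorm_1 [simp]: "qnorm 1 = 1"
  by (simp add: qnorm_def one_quat_def)

lemma qnorm_nonneg: "qnorm q \<ge> 0"
  by (simp add: qnorm_def)

lemma qnorm_eq_0_iff: "qnorm q = 0 \<longleftrightarrow> q = 0"
proof
  assume "qnorm q = 0"
  then have "qre q = 0 \<and> qi q = 0 \<and> qj q = 0 \<and> qk q = 0"
    unfolding qnorm_def by (simp add: add_nonneg_eq_0_iff)
  then show "q = 0"
    by (auto intro: quat_eqI simp: zero_quat_def)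
qed (simp add: qnorm_def zero_quat_def)

instance quat :: ring_1_no_zero_divisors
proof
  fix a b :: quat
  assume "a \<noteq> 0" "b \<noteq> 0"
  then show "a * b \<noteq> 0"
    by (simp flip: qnorm_eq_0_iff add: qnorm_mult)
qed

lemma right_inverse_quat: "d \<noteq> 0 \<Longrightarrow> d * (qreal (1 / qnorm d) * qconj d) = 1"
proof -
  assume "d \<noteq> 0"
  have "d * (qreal (1 / qnorm d) * qconj d) = qreal (1 / qnorm d) * (d * qconj d)"
    by (metis mult.assoc qreal_mult_commute)
  also have "\<dots> = 1"
    using \<open>d \<noteq> 0\<close> by (simp add: mult_qconj qreal_mult_qreal qnorm_eq_0_iff)
  finally show ?thesis .
qed

section \<open>Coordinates in the basis v1, v2, v3, v4\<close>

type_synonym coords = "int \<times> int \<times> int \<times> int"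

fun of_coords :: "coords \<Rightarrow> quat" where
  "of_coords (a, b, c, d) = Hcomb a b c d"

declare of_coords.simps [simp del]

fun coords_mult :: "coords \<Rightarrow> coords \<Rightarrow> coords" where
  "coords_mult (a1, a2, a3, a4) (b1, b2, b3, b4) =
    (a1*b1 - a2*b2 - a2*b3 - a3*b3 - a4*b2 - a4*b3 - a4*b4,
     a1*b2 + a2*b1 + a2*b4 + a3*b2 + a3*b4 - a4*b3,
     a1*b3 - a2*b4 + a3*b1 + a3*b3 + a4*b2 + a4*b3,
     a1*b4 + a2*b3 - a3*b2 + a4*b1 + a4*b3 + a4*b4)"

fun norm_form :: "coords \<Rightarrow> int" where
  "norm_form (a, b, c, d) = a^2 + b^2 + (a + b) * (c + d) + c^2 + c * d + d^2"

lemma Hcomb_eq_Quat: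
  "Hcomb a b c d = Quat (a + (c + d) / 2) (b + (c + d) / 2) (c * sqrt 2 / 2) (d * sqrt 2 / 2)"
  by (simp add: Hcomb_def v1_def v2_def v3_def v4_def qreal_def qI_def qJ_def qK_def
      quat_arith_defs algebra_simps add_divide_distrib)

lemma H122_iff_of_coords: "q \<in> H122 \<longleftrightarrow> (\<exists>e. q = of_coords e)"
proof
  assume "q \<in> H122"
  then obtain a b c d where "q = Hcomb a b c d"
    unfolding H122_def by blast
  then show "\<exists>e. q = of_coords e"
    by (intro exI[of _ "(a, b, c, d)"]) (simp add: of_coords.simps)
next
  assume "\<exists>e. q = of_coords e"
  then obtain a b c d where "q = of_coords (a, b, c, d)"
    by (metis prod_cases4)
  then show "q \<in> H122"
    unfolding H122_def by (auto simp: of_coords.simps)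
qed

lemma of_coords_in_H122 [simp]: "of_coords e \<in> H122"
  unfolding H122_iff_of_coords by blast

lemma of_coords_add: "of_coords (e + f) = of_coords e + of_coords f"
  by (cases e rule: prod_cases4; cases f rule: prod_cases4)
    (auto intro!: quat_eqI simp: of_coords.simps Hcomb_eq_Quat quat_arith_defs algebra_simps
      add_divide_distrib)

lemma of_coords_diff: "of_coords (e - f) = of_coords e - of_coords f"
  by (cases e rule: prod_cases4; cases f rule: prod_cases4)
    (auto intro!: quat_eqI simp: of_coords.simps Hcomb_eq_Quat quat_arith_defs algebra_simps
      diff_divide_distrib)

lemma of_coords_mult: "of_coords e * of_coords f = of_coords (coords_mult e f)"
  by (cases e rule: prod_cases4; cases f rule: prod_cases4)
    (auto intro!: quat_eqI simp: of_coords.simps Hcomb_eq_Quat quat_arith_defs algebra_simps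
      add_divide_distrib diff_divide_distrib)

lemma of_coords_inject [simp]: "of_coords e = of_coords f \<longleftrightarrow> e = f"
proof
  assume eq: "of_coords e = of_coords f"
  obtain a b c d a' b' c' d' where ef: "e = (a, b, c, d)" "f = (a', b', c', d')"
    by (metis prod_cases4)
  have "c = c'" "d = d'"
    using arg_cong[OF eq, of qj] arg_cong[OF eq, of qk]
    by (simp_all add: ef of_coords.simps Hcomb_eq_Quat)
  moreover have "a = a'" "b = b'"
    using arg_cong[OF eq, of qre] arg_cong[OF eq, of qi] calculation
    by (simp_all add: ef of_coords.simps Hcomb_eq_Quat)
  ultimately show "e = f" by (simp add: ef)
qed simp

lemma qconj_of_coords: "qconj (of_coords (a, b, c, d)) = of_coords (a + c + d, - b, - c, - d)"
  by (auto intro!: quat_eqI simp: of_coords.simps Hcomb_eq_Quat qconj_def field_simps)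

lemma one_eq_of_coords: "1 = of_coords (1, 0, 0, 0)"
  by (auto intro!: quat_eqI simp: of_coords.simps Hcomb_eq_Quat quat_arith_defs)

lemma qreal_of_int_eq_of_coords: "qreal (of_int n) = of_coords (n, 0, 0, 0)"
  by (auto intro!: quat_eqI simp: of_coords.simps Hcomb_eq_Quat qreal_def)

lemma qreal_of_int_mult_of_coords:
  "qreal (of_int n) * of_coords (a, b, c, d) = of_coords (n * a, n * b, n * c, n * d)"
  by (auto intro!: quat_eqI simp: of_coords.simps Hcomb_eq_Quat qreal_def quat_arith_defs
      algebra_simps add_divide_distrib)

lemma qnorm_of_coords: "qnorm (of_coords e) = of_int (norm_form e)"
  by (cases e rule: prod_cases4)
    (simp add: qnorm_def of_coords.simps Hcomb_eq_Quat power2_eq_square algebra_simps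
      add_divide_distrib)

lemma H122_mult: "a \<in> H122 \<Longrightarrow> b \<in> H122 \<Longrightarrow> a * b \<in> H122"
  unfolding H122_iff_of_coords by (metis of_coords_mult)

lemma H122_add: "a \<in> H122 \<Longrightarrow> b \<in> H122 \<Longrightarrow> a + b \<in> H122"
  unfolding H122_iff_of_coords by (metis of_coords_add)

lemma H122_diff: "a \<in> H122 \<Longrightarrow> b \<in> H122 \<Longrightarrow> a - b \<in> H122"
  unfolding H122_iff_of_coords by (metis of_coords_diff)

lemma H122_one: "1 \<in> H122"
  by (simp add: one_eq_of_coords)

lemma H122_zero: "0 \<in> H122"
  using H122_diff[OF H122_one H122_one] by simp

lemma H122_qreal_of_int: "qreal (of_int n) \<in> H122"
  by (simp add: qreal_of_int_eq_of_coords)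

lemma H122_qconj: "a \<in> H122 \<Longrightarrow> qconj a \<in> H122"
  unfolding H122_iff_of_coords by (metis qconj_of_coords prod_cases4)

lemma qnorm_H122_Nats: "q \<in> H122 \<Longrightarrow> qnorm q \<in> \<nat>"
proof -
  assume "q \<in> H122"
  then obtain e where q: "q = of_coords e"
    by (auto simp: H122_iff_of_coords)
  have "norm_form e \<ge> 0"
    using qnorm_nonneg[of "of_coords e"] by (simp add: qnorm_of_coords)
  then have "qnorm q = of_nat (nat (norm_form e))"
    by (simp add: q qnorm_of_coords)
  then show ?thesis by simp
qed

lemma qnorm_eq_1_if_mult_eq_1:
  assumes "u \<in> H122" "v \<in> H122" "u * v = 1"
  shows "qnorm u = 1"
proof -
  obtain m n where mn: "qnorm u = of_nat m" "qnorm v = of_nat n"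
    using qnorm_H122_Nats assms(1,2) by (metis Nats_cases)
  moreover have "qnorm u * qnorm v = 1"
    using qnorm_mult[of u v] assms(3) by simp
  ultimately have "m * n = 1"
    by (simp flip: of_nat_mult)
  then show ?thesis
    using mn by simp
qed

lemma Hunit_iff_qnorm: "Hunit u \<longleftrightarrow> u \<in> H122 \<and> qnorm u = 1"
proof
  assume "Hunit u"
  then show "u \<in> H122 \<and> qnorm u = 1"
    unfolding Hunit_def using qnorm_eq_1_if_mult_eq_1 by blast
next
  assume "u \<in> H122 \<and> qnorm u = 1"
  then show "Hunit u"
    unfolding Hunit_def using H122_qconj mult_qconj[of u] qconj_mult_self[of u] by auto
qed

lemma Hprime_if_prime_qnorm:
  assumes "d \<in> H122" "qnorm d = of_nat q" "prime q"
  shows "Hprime d"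
  unfolding Hprime_def
proof (intro conjI ballI impI)
  show "d \<in> H122" by fact
  show "d \<noteq> 0"
    using assms(2,3) qnorm_eq_0_iff[of d] by auto
  show "\<not> Hunit d"
    using assms(2,3) by (auto simp: Hunit_iff_qnorm)
  fix a b
  assume "a \<in> H122" "b \<in> H122" "d = a * b"
  moreover obtain x y where xy: "qnorm a = of_nat x" "qnorm b = of_nat y"
    using qnorm_H122_Nats \<open>a \<in> H122\<close> \<open>b \<in> H122\<close> by (metis Nats_cases)
  ultimately have "q = x * y"
    using assms(2) qnorm_mult[of a b] by (simp flip: of_nat_mult)
  then have "x = 1 \<or> y = 1"
    using prime_product[of x y] assms(3) by simp
  then show "Hunit a \<or> Hunit b"
    using xy \<open>a \<in> H122\<close> \<open>b \<in> H122\<close> by (auto simp: Hunit_iff_qnorm)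
qed

section \<open>Euclidean division and left gcds\<close>

lemma round_dist: "\<bar>x - real_of_int \<lfloor>x + 1/2\<rfloor>\<bar> \<le> 1/2"
  using floor_correct[of "x + 1/2"] by linarith

lemma power2_le_quarter: "\<bar>x :: real\<bar> \<le> 1/2 \<Longrightarrow> x^2 \<le> 1/4"
  using power_mono[of "\<bar>x\<bar>" "1/2" 2] by (simp add: power2_eq_square)

text \<open>Rounding the j- and k-coordinates first and then the 1- and i-coordinates leaves an
  error of at most 1/4 + 1/4 + 1/8 + 1/8 = 3/4 in norm.\<close>

lemma H122_approx: "\<exists>h\<in>H122. qnorm (z - h) < 1"
proof -
  define s where "s = sqrt (2 :: real)"
  have ss: "s * s = 2" "s * (s * y) = 2 * y" for y
    unfolding s_def by (simp_all add: mult.assoc[symmetric])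
  define c3 where "c3 = \<lfloor>qj z * s + 1/2\<rfloor>"
  define c4 where "c4 = \<lfloor>qk z * s + 1/2\<rfloor>"
  define c1 where "c1 = \<lfloor>qre z - (c3 + c4) / 2 + 1/2\<rfloor>"
  define c2 where "c2 = \<lfloor>qi z - (c3 + c4) / 2 + 1/2\<rfloor>"
  have "\<bar>qre z - (c3 + c4) / 2 - c1\<bar> \<le> 1/2" "\<bar>qi z - (c3 + c4) / 2 - c2\<bar> \<le> 1/2"
    "\<bar>qj z * s - c3\<bar> \<le> 1/2" "\<bar>qk z * s - c4\<bar> \<le> 1/2"
    unfolding c1_def c2_def c3_def c4_def by (rule round_dist)+
  note small = this[THEN power2_le_quarter]
  have "(qj z - c3 * s / 2)^2 = (qj z * s - c3)^2 / 2"
    "(qk z - c4 * s / 2)^2 = (qk z * s - c4)^2 / 2"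
    by (simp_all add: power2_eq_square field_simps ss)
  then have "qnorm (z - of_coords (c1, c2, c3, c4)) =
      (qre z - (c3 + c4) / 2 - c1)^2 + (qi z - (c3 + c4) / 2 - c2)^2
      + (qj z * s - c3)^2 / 2 + (qk z * s - c4)^2 / 2"
    by (simp add: qnorm_def of_coords.simps Hcomb_eq_Quat quat_arith_defs s_def
        algebra_simps)
  also have "\<dots> < 1"
    using small by linarith
  finally show ?thesis
    using of_coords_in_H122 by blast
qed

lemma H122_left_division: "d \<noteq> 0 \<Longrightarrow> \<exists>h\<in>H122. qnorm (x - d * h) < qnorm d"
proof -
  assume "d \<noteq> 0"
  define z where "z = qreal (1 / qnorm d) * qconj d * x"
  have dz: "d * z = x"
    unfolding z_def using right_inverse_quat[OF \<open>d \<noteq> 0\<close>]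
    by (metis mult.assoc mult_1_left)
  obtain h where h: "h \<in> H122" "qnorm (z - h) < 1"
    using H122_approx by blast
  have "qnorm (x - d * h) = qnorm d * qnorm (z - h)"
    by (simp add: dz[symmetric] right_diff_distrib[symmetric] qnorm_mult)
  also have "\<dots> < qnorm d"
    using h(2) \<open>d \<noteq> 0\<close> qnorm_nonneg[of d] qnorm_eq_0_iff[of d] by simp
  finally show ?thesis
    using h(1) by blast
qed

lemma left_gcd_exists:
  assumes "a \<in> H122" "b \<in> H122" "b \<noteq> 0"
  shows "\<exists>d. left_gcd a b d"
proof -
  define L where "L = {a * x + b * y | x y. x \<in> H122 \<and> y \<in> H122}"
  have L_H122: "l \<in> H122" if "l \<in> L" for l
    using that assms by (auto simp: L_def intro!: H122_add H122_mult)
  have "a \<in> L" "b \<in> L"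
    unfolding L_def using H122_zero H122_one by force+
  have L_diff: "l - d * h \<in> L" if l: "l \<in> L" and d: "d \<in> L" and h: "h \<in> H122" for l d h
  proof -
    obtain x y x' y' where "l = a * x + b * y" "d = a * x' + b * y'"
      "x \<in> H122" "y \<in> H122" "x' \<in> H122" "y' \<in> H122"
      using l d unfolding L_def by blast
    then show ?thesis
      unfolding L_def using h
      by (intro CollectI exI[of _ "x - x' * h"] exI[of _ "y - y' * h"])
        (auto simp: algebra_simps intro!: H122_diff H122_mult)
  qed
  obtain d where d: "d \<in> L" "d \<noteq> 0"
    and least: "\<And>l. l \<in> L \<Longrightarrow> l \<noteq> 0 \<Longrightarrow> nat \<lfloor>qnorm d\<rfloor> \<le> nat \<lfloor>qnorm l\<rfloor>"
    using ex_has_least_nat[of "\<lambda>l. l \<in> L \<and> l \<noteq> 0" b "\<lambda>l. nat \<lfloor>qnorm l\<rfloor>"]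
      \<open>b \<in> L\<close> \<open>b \<noteq> 0\<close> by blast
  have dvd: "\<exists>h\<in>H122. l = d * h" if "l \<in> L" for l
  proof -
    obtain h where h: "h \<in> H122" "qnorm (l - d * h) < qnorm d"
      using H122_left_division[OF d(2)] by blast
    have "l - d * h \<in> L"
      using L_diff[OF that d(1) h(1)] .
    moreover obtain m n where "qnorm (l - d * h) = of_nat m" "qnorm d = of_nat n"
      using qnorm_H122_Nats[OF L_H122] \<open>l - d * h \<in> L\<close> d(1) by (metis Nats_cases)
    ultimately have "l - d * h = 0"
      using least[of "l - d * h"] h(2) by fastforce
    then show ?thesis
      using h(1) by auto
  qed
  show ?thesis
    using L_H122[OF d(1)] dvd[OF \<open>a \<in> L\<close>] dvd[OF \<open>b \<in> L\<close>] d(1)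
    unfolding left_gcd_def L_def by blast
qed

lemma left_gcd_mult_unit:
  assumes "left_gcd a b d" "Hunit u"
  shows "left_gcd a b (d * u)"
proof -
  obtain v where v: "u \<in> H122" "v \<in> H122" "u * v = 1"
    using assms(2) unfolding Hunit_def by blast
  obtain a' b' x y where H: "d \<in> H122" "a' \<in> H122" "b' \<in> H122" "x \<in> H122" "y \<in> H122"
    and eqs: "a = d * a'" "b = d * b'" "d = a * x + b * y"
    using assms(1) unfolding left_gcd_def by blast
  have "a = d * u * (v * a')" "b = d * u * (v * b')"
    using eqs(1,2) v(3) by (metis mult.assoc mult_1_left)+
  moreover have "d * u = a * (x * u) + b * (y * u)"
    using eqs(3) by (simp add: distrib_right mult.assoc)
  ultimately show ?thesis
    unfolding left_gcd_def using v H by (blast intro: H122_mult)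
qed

lemma left_gcd_unique_up_to_unit:
  assumes "left_gcd a b d" "left_gcd a b d'" "d \<noteq> 0"
  shows "\<exists>u. Hunit u \<and> d' = d * u"
proof -
  have right_dvd: "\<exists>w\<in>H122. e' = e * w"
    if gcds: "left_gcd a b e" "left_gcd a b e'" for e e'
  proof -
    obtain a1 b1 x y where "a1 \<in> H122" "b1 \<in> H122" "x \<in> H122" "y \<in> H122"
      "a = e * a1" "b = e * b1" "e' = a * x + b * y"
      using gcds unfolding left_gcd_def by blast
    then have "e' = e * (a1 * x + b1 * y)" "a1 * x + b1 * y \<in> H122"
      by (simp_all add: distrib_left mult.assoc H122_add H122_mult)
    then show ?thesis by blast
  qed
  obtain w w' where w: "w \<in> H122" "w' \<in> H122" "d' = d * w" "d = d' * w'"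
    using right_dvd[OF assms(1,2)] right_dvd[OF assms(2,1)] by blast
  then have "d = d * (w * w')"
    by (metis mult.assoc)
  then have "w * w' = 1"
    using assms(3) by (simp add: mult_cancel_left1)
  then have "Hunit w"
    using w(1,2) qnorm_eq_1_if_mult_eq_1 by (simp add: Hunit_iff_qnorm)
  then show ?thesis
    using w(3) by blast
qed

section \<open>Left gcds of a primitive element and a rational prime\<close>

lemma dvd_coords_if_eq_scaled:
  assumes "Hcomb c1 c2 c3 c4 = qreal (of_int n) * w" "w \<in> H122"
  shows "n dvd gcd (gcd c1 c2) (gcd c3 c4)"
proof -
  obtain e1 e2 e3 e4 where "w = of_coords (e1, e2, e3, e4)"
    using assms(2) unfolding H122_iff_of_coords by (metis prod_cases4)
  then have "(c1, c2, c3, c4) = (n * e1, n * e2, n * e3, n * e4)"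
    using assms(1) by (simp add: qreal_of_int_mult_of_coords flip: of_coords.simps)
  then show ?thesis by simp
qed

lemma qconj_mult_left_gcd_scaled:
  assumes "left_gcd c (qreal (of_int n)) d" "qnorm c = of_int (n * m)" "c \<in> H122"
  shows "\<exists>w\<in>H122. qconj c * d = qreal (of_int n) * w"
proof -
  define P where "P = qreal (of_int n)"
  obtain x y where xy: "x \<in> H122" "y \<in> H122" "d = c * x + P * y"
    using assms(1) unfolding left_gcd_def P_def by blast
  have "qconj c * d = (qconj c * c) * x + (qconj c * P) * y"
    by (simp add: xy(3) distrib_left mult.assoc)
  also have "\<dots> = P * (qreal (of_int m) * x + qconj c * y)"
    using assms(2) unfolding P_def qconj_mult_self
    by (simp add: qreal_mult_qreal[symmetric] qreal_mult_commute[of _ "qconj c", symmetric]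
        distrib_left mult.assoc)
  finally show ?thesis
    unfolding P_def using xy assms(3)
    by (blast intro: H122_add H122_mult H122_qreal_of_int H122_qconj)
qed

lemma qnorm_left_gcd_prime:
  fixes p m :: int
  assumes c: "c = Hcomb c1 c2 c3 c4" "gcd (gcd c1 c2) (gcd c3 c4) = 1"
    and p: "prime p" and norm_c: "qnorm c = of_int (p * m)"
    and gcd: "left_gcd c (qreal (of_int p)) d"
  shows "qnorm d = of_int p"
proof -
  define P where "P = qreal (of_int p)"
  have c_not_scaled: "c \<noteq> P * w" if "w \<in> H122" for w
    using dvd_coords_if_eq_scaled[of c1 c2 c3 c4 p w] c p that
    unfolding P_def by (auto simp: not_prime_unit)
  obtain a' b' where H: "d \<in> H122" "a' \<in> H122" "b' \<in> H122"
    and "c = d * a'" "P = d * b'"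
    using gcd unfolding left_gcd_def P_def by blast
  obtain k l where kl: "qnorm d = of_nat k" "qnorm b' = of_nat l"
    using qnorm_H122_Nats H by (metis Nats_cases)
  have "p \<ge> 0"
    using p by (simp add: prime_ge_0_int)
  have "real (k * l) = qnorm P"
    using kl \<open>P = d * b'\<close> by (simp add: qnorm_mult)
  also have "\<dots> = real (nat p ^ 2)"
    using \<open>p \<ge> 0\<close> by (simp add: P_def qnorm_qreal)
  finally have "k * l = nat p ^ 2"
    by (simp only: of_nat_eq_iff)
  then have "k dvd nat p ^ 2"
    by (metis dvd_triv_left)
  then obtain i where "i \<le> 2" "k = nat p ^ i"
    using divides_primepow_nat[of "nat p" k 2] p by auto
  moreover have "i = 0 \<or> i = 1 \<or> i = 2"
    using \<open>i \<le> 2\<close> by auto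
  ultimately consider "k = 1" | "k = nat p" | "k = nat p ^ 2"
    by fastforce
  then show ?thesis
  proof cases
    case 1
    then have "d * qconj d = 1"
      using kl by (simp add: mult_qconj)
    obtain w where "w \<in> H122" "qconj c * d = P * w"
      using qconj_mult_left_gcd_scaled[OF gcd norm_c] c(1)
      unfolding P_def H122_def by blast
    have "qconj c = P * (w * qconj d)"
      by (metis \<open>d * qconj d = 1\<close> \<open>qconj c * d = P * w\<close> mult.assoc mult_1_right)
    then have "c = P * (d * qconj w)"
      by (metis P_def qconj_mult qconj_qconj qconj_qreal qreal_mult_commute mult.assoc)
    then show ?thesis
      using c_not_scaled \<open>w \<in> H122\<close> H(1) by (blast intro: H122_mult H122_qconj)
  next
    case 2
    then show ?thesis
      using kl \<open>p \<ge> 0\<close> by simp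
  next
    case 3
    then have "l = 1"
      using \<open>k * l = nat p ^ 2\<close> prime_gt_0_int[OF p] by simp
    then have "b' * qconj b' = 1"
      using kl by (simp add: mult_qconj)
    then have "d = P * qconj b'"
      by (metis \<open>P = d * b'\<close> mult.assoc mult_1_right)
    then have "c = P * (qconj b' * a')"
      by (simp add: \<open>c = d * a'\<close> mult.assoc)
    then show ?thesis
      using c_not_scaled H by (blast intro: H122_mult H122_qconj)
  qed
qed

section \<open>Primary associates\<close>

fun in_I_coords :: "coords \<Rightarrow> bool" where
  "in_I_coords (a, b, c, d) \<longleftrightarrow>
     even a \<and> even b \<and> even c \<and> even d \<and> 4 dvd (c - d) \<and> 4 dvd (a + b - c)"

lemma Iideal_iff: "x \<in> Iideal \<longleftrightarrow> (\<exists>h\<in>H122. x = of_coords (2, 2, 0, 0) * h)"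
proof -
  have "qreal 2 * (1 + qI) = of_coords (2, 2, 0, 0)"
    by (auto intro!: quat_eqI simp: of_coords.simps Hcomb_eq_Quat qreal_def qI_def
        quat_arith_defs)
  then show ?thesis
    unfolding Iideal_def by auto
qed

lemma of_coords_in_Iideal_iff: "of_coords e \<in> Iideal \<longleftrightarrow> in_I_coords e"
proof
  assume "of_coords e \<in> Iideal"
  then obtain h where "h \<in> H122" "of_coords e = of_coords (2, 2, 0, 0) * h"
    unfolding Iideal_iff by blast
  moreover obtain h1 h2 h3 h4 where "h = of_coords (h1, h2, h3, h4)"
    using \<open>h \<in> H122\<close> unfolding H122_iff_of_coords by (metis prod_cases4)
  ultimately have "e = coords_mult (2, 2, 0, 0) (h1, h2, h3, h4)"
    by (simp add: of_coords_mult)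
  then show "in_I_coords e"
    by simp
next
  obtain a b c d where e: "e = (a, b, c, d)"
    by (metis prod_cases4)
  assume "in_I_coords e"
  then have "even a" "even b" "even d" "4 dvd (c - d)" "4 dvd (a + b - c)"
    by (simp_all add: e)
  then obtain a' b' d' t k where
    "a = 2 * a'" "b = 2 * b'" "d = 2 * d'" "c - d = 4 * t" "a + b - c = 4 * k"
    by (metis evenE dvdE)
  then have "e = coords_mult (2, 2, 0, 0) (d' + 2 * t + k, b' - d' - t - k, d' + t, - t)"
    by (simp add: e; linarith)
  then show "of_coords e \<in> Iideal"
    unfolding Iideal_iff by (metis of_coords_mult of_coords_in_H122)
qed

lemma Iideal_add:
  assumes "x \<in> Iideal" "y \<in> Iideal"
  shows "x + y \<in> Iideal"
proof -
  obtain h h' where "h \<in> H122" "h' \<in> H122"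
    "x = of_coords (2, 2, 0, 0) * h" "y = of_coords (2, 2, 0, 0) * h'"
    using assms unfolding Iideal_iff by blast
  then show ?thesis
    unfolding Iideal_iff by (intro bexI[of _ "h + h'"]) (simp_all add: distrib_left H122_add)
qed

lemma Iideal_diff:
  assumes "x \<in> Iideal" "y \<in> Iideal"
  shows "x - y \<in> Iideal"
proof -
  obtain h h' where "h \<in> H122" "h' \<in> H122"
    "x = of_coords (2, 2, 0, 0) * h" "y = of_coords (2, 2, 0, 0) * h'"
    using assms unfolding Iideal_iff by blast
  then show ?thesis
    unfolding Iideal_iff
    by (intro bexI[of _ "h - h'"]) (simp_all add: right_diff_distrib H122_diff)
qed

lemma Iideal_mult_right:
  assumes "x \<in> Iideal" "y \<in> H122"
  shows "x * y \<in> Iideal"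
proof -
  obtain h where "h \<in> H122" "x = of_coords (2, 2, 0, 0) * h"
    using assms(1) unfolding Iideal_iff by blast
  then show ?thesis
    unfolding Iideal_iff using assms(2)
    by (intro bexI[of _ "h * y"]) (simp_all add: mult.assoc H122_mult)
qed

lemma four_mult_in_Iideal:
  assumes "h \<in> H122"
  shows "qreal 4 * h \<in> Iideal"
proof -
  have "qreal 4 = of_coords (2, 2, 0, 0) * of_coords (1, -1, 0, 0)"
    using qreal_of_int_eq_of_coords[of 4] by (simp add: of_coords_mult)
  then show ?thesis
    unfolding Iideal_iff using assms
    by (intro bexI[of _ "of_coords (1, -1, 0, 0) * h"]) (simp_all add: mult.assoc H122_mult)
qed

definition primary_residues :: "coords list" where
  "primary_residues = [(1, 0, 0, 0), (1, 0, 2, 0)]"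

lemma primary_iff_residue:
  "primary q \<longleftrightarrow> q \<in> H122 \<and> (\<exists>r\<in>set primary_residues. q - of_coords r \<in> Iideal)"
proof -
  have "1 + qreal 2 * v3 = of_coords (1, 0, 2, 0)"
    by (auto intro!: quat_eqI simp: of_coords.simps Hcomb_eq_Quat qreal_def v3_def qI_def qJ_def
        quat_arith_defs)
  then show ?thesis
    unfolding primary_def primary_residues_def by (auto simp flip: one_eq_of_coords)
qed

lemma primary_of_coords_iff:
  "primary (of_coords e) \<longleftrightarrow> (\<exists>r\<in>set primary_residues. in_I_coords (e - r))"
  by (simp add: primary_iff_residue of_coords_in_Iideal_iff flip: of_coords_diff)

lemma primary_cong:
  assumes "primary x" "y \<in> H122" "y - x \<in> Iideal"
  shows "primary y"
proof -
  obtain r where "r \<in> set primary_residues" "x - of_coords r \<in> Iideal"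
    using assms(1) unfolding primary_iff_residue by blast
  have "y - of_coords r = (y - x) + (x - of_coords r)"
    by simp
  also have "\<dots> \<in> Iideal"
    using Iideal_add assms(3) \<open>x - of_coords r \<in> Iideal\<close> by blast
  finally show ?thesis
    unfolding primary_iff_residue using assms(2) \<open>r \<in> set primary_residues\<close> by blast
qed

lemma qnorm_odd_if_primary:
  assumes "primary q" "qnorm q = of_int n"
  shows "odd n"
proof -
  obtain a b c d where q: "q = of_coords (a, b, c, d)"
    using assms(1) unfolding primary_def H122_iff_of_coords by (metis prod_cases4)
  then have "n = norm_form (a, b, c, d)"
    using assms(2) qnorm_of_coords of_int_eq_iff by metis
  then show ?thesis
    using assms(1) by (auto simp: q primary_of_coords_iff primary_residues_def)
qed

definition unit_coords :: "coords list" where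
  "unit_coords =
    [(-1, -1, 0, 1), (-1, -1, 1, 0), (-1, -1, 1, 1), (-1, 0, 0, 0), (-1, 0, 0, 1), (-1, 0, 1, 0),
     (0, -1, 0, 0), (0, -1, 0, 1), (0, -1, 1, 0), (0, 0, -1, 0), (0, 0, -1, 1), (0, 0, 0, -1),
     (0, 0, 0, 1), (0, 0, 1, -1), (0, 0, 1, 0), (0, 1, -1, 0), (0, 1, 0, -1), (0, 1, 0, 0),
     (1, 0, -1, 0), (1, 0, 0, -1), (1, 0, 0, 0), (1, 1, -1, -1), (1, 1, -1, 0), (1, 1, 0, -1)]"

lemma norm_form_eq_1_iff: "norm_form e = 1 \<longleftrightarrow> e \<in> set unit_coords"
proof
  obtain a b c d where e: "e = (a, b, c, d)"
    by (metis prod_cases4)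
  assume "norm_form e = 1"
  then have "(2*a + c + d)^2 + (2*b + c + d)^2 + 2 * c^2 + 2 * d^2 = 4"
    by (simp add: e power2_eq_square algebra_simps)
  then have "(2*a + c + d)^2 \<le> 4" "(2*b + c + d)^2 \<le> 4" "c^2 < 4" "d^2 < 4"
    using zero_le_power2[of "2*a + c + d"] zero_le_power2[of "2*b + c + d"]
      zero_le_power2[of c] zero_le_power2[of d] by linarith+
  moreover have "\<bar>x\<bar> \<le> 2" if "x^2 \<le> 4" for x :: int
    using abs_le_square_iff[of x 2] that by simp
  moreover have "\<bar>x\<bar> < 2" if "x^2 < 4" for x :: int
    using power2_less_imp_less[of "\<bar>x\<bar>" 2] that by simp
  ultimately have "\<bar>2*a + c + d\<bar> \<le> 2" "\<bar>2*b + c + d\<bar> \<le> 2" "\<bar>c\<bar> < 2" "\<bar>d\<bar> < 2"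
    by blast+
  then have "a \<in> set [-2..2]" "b \<in> set [-2..2]" "c \<in> set [-1..1]" "d \<in> set [-1..1]"
    by auto
  moreover have "\<forall>a\<in>set [-2..2]. \<forall>b\<in>set [-2..2]. \<forall>c\<in>set [-1..1]. \<forall>d\<in>set [-1..1].
      norm_form (a, b, c, d) = 1 \<longrightarrow> (a, b, c, d) \<in> set unit_coords"
    unfolding unit_coords_def by code_simp
  ultimately show "e \<in> set unit_coords"
    using \<open>norm_form e = 1\<close> e by blast
next
  show "e \<in> set unit_coords \<Longrightarrow> norm_form e = 1"
    unfolding unit_coords_def by auto
qed

lemma primary_residue_mult_unit_exists_mod_4:
  "\<forall>a\<in>set [0..3]. \<forall>b\<in>set [0..3]. \<forall>c\<in>set [0..3]. \<forall>d\<in>set [0..3].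
    odd (norm_form (a, b, c, d)) \<longrightarrow>
    (\<exists>u\<in>set unit_coords. \<exists>r\<in>set primary_residues.
      in_I_coords (coords_mult (a, b, c, d) u - r))"
  unfolding unit_coords_def primary_residues_def by code_simp

lemma primary_residue_mult_unit_unique:
  "\<forall>u\<in>set unit_coords. \<forall>r\<in>set primary_residues. \<forall>r'\<in>set primary_residues.
    in_I_coords (coords_mult r u - r') \<longrightarrow> u = (1, 0, 0, 0)"
  unfolding unit_coords_def primary_residues_def by code_simp

lemma primary_associate_exists:
  assumes "d \<in> H122" "qnorm d = of_int n" "odd n"
  shows "\<exists>u. Hunit u \<and> primary (d * u)"
proof -
  obtain a b c e where d: "d = of_coords (a, b, c, e)"
    using assms(1) unfolding H122_iff_of_coords by (metis prod_cases4)
  define m where "m = (a mod 4, b mod 4, c mod 4, e mod 4)"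
  have "n = norm_form (a, b, c, e)"
    using assms(2) qnorm_of_coords of_int_eq_iff d by metis
  moreover have "even (x mod 4) \<longleftrightarrow> even x" for x :: int
    by presburger
  ultimately have "odd (norm_form m)"
    using assms(3) by (simp add: m_def)
  moreover have "x mod 4 \<in> set [0..3]" for x :: int
    by simp
  ultimately obtain u r where u: "u \<in> set unit_coords" "r \<in> set primary_residues"
    "in_I_coords (coords_mult m u - r)"
    using primary_residue_mult_unit_exists_mod_4 unfolding m_def by blast
  then have "primary (of_coords m * of_coords u)"
    by (auto simp: of_coords_mult primary_of_coords_iff)
  moreover have "(a, b, c, e) - m =
      (4 * (a div 4), 4 * (b div 4), 4 * (c div 4), 4 * (e div 4))"
    by (simp add: m_def minus_mod_eq_mult_div)
  then have "d - of_coords m = qreal 4 * of_coords (a div 4, b div 4, c div 4, e div 4)"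
    using qreal_of_int_mult_of_coords[of 4] by (simp add: d flip: of_coords_diff)
  then have "d * of_coords u - of_coords m * of_coords u \<in> Iideal"
    by (simp add: left_diff_distrib[symmetric] mult.assoc four_mult_in_Iideal H122_mult)
  ultimately have "primary (d * of_coords u)"
    using primary_cong assms(1) H122_mult of_coords_in_H122 by blast
  moreover have "Hunit (of_coords u)"
    using u(1) by (simp add: Hunit_iff_qnorm qnorm_of_coords norm_form_eq_1_iff)
  ultimately show ?thesis by blast
qed

lemma primary_associate_unique:
  assumes "primary d" "Hunit u" "primary (d * u)"
  shows "u = 1"
proof -
  obtain r where r: "r \<in> set primary_residues" "d - of_coords r \<in> Iideal"
    using assms(1) unfolding primary_iff_residue by blast
  obtain r' where r': "r' \<in> set primary_residues" "d * u - of_coords r' \<in> Iideal"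
    using assms(3) unfolding primary_iff_residue by blast
  obtain f where "u = of_coords f"
    using assms(2) by (auto simp: Hunit_iff_qnorm H122_iff_of_coords)
  moreover from this have "f \<in> set unit_coords"
    using assms(2) by (simp add: Hunit_iff_qnorm qnorm_of_coords flip: norm_form_eq_1_iff)
  ultimately have u: "u = of_coords f" "f \<in> set unit_coords" .
  have "of_coords r * u - of_coords r' = (d * u - of_coords r') - (d - of_coords r) * u"
    by (simp add: algebra_simps)
  also have "\<dots> \<in> Iideal"
    using r(2) r'(2) u(1) by (blast intro: Iideal_diff Iideal_mult_right of_coords_in_H122)
  finally have "in_I_coords (coords_mult r f - r')"
    by (simp add: u(1) of_coords_mult of_coords_in_Iideal_iff flip: of_coords_diff)
  then show "u = 1"
    using primary_residue_mult_unit_unique r(1) r'(1) u by (auto simp: one_eq_of_coords)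
qed

lemma primary_left_gcd_exists:
  assumes "left_gcd a b d" "qnorm d = of_int n" "odd n"
  shows "\<exists>d'. left_gcd a b d' \<and> primary d'"
proof -
  obtain u where "Hunit u" "primary (d * u)"
    using primary_associate_exists[of d n] assms by (auto simp: left_gcd_def)
  then show ?thesis
    using left_gcd_mult_unit[OF assms(1)] by blast
qed

lemma primary_left_gcd_unique:
  assumes "left_gcd a b d" "left_gcd a b d'" "d \<noteq> 0" "primary d" "primary d'"
  shows "d' = d"
proof -
  obtain u where "Hunit u" "d' = d * u"
    using left_gcd_unique_up_to_unit assms(1-3) by blast
  then show ?thesis
    using primary_associate_unique assms(4,5) by simp
qed

theorem lemma51:
  fixes c :: quat and p :: int
  assumes "primitive c"
    and "prime p"
    and "\<exists>m::int. qN c = qreal (of_int (p * m))"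
  shows "(\<forall>d. left_gcd c (qreal (of_int p)) d \<longrightarrow> Hprime d)
       \<and> (\<exists>!d. left_gcd c (qreal (of_int p)) d \<and> primary d)"
proof -
  define P where "P = qreal (of_int p)"
  obtain c1 c2 c3 c4 where c: "c = Hcomb c1 c2 c3 c4" "gcd (gcd c1 c2) (gcd c3 c4) = 1"
    and "primary c"
    using assms(1) unfolding primitive_def by auto
  obtain m where norm_c: "qnorm c = of_int (p * m)"
    using assms(3) by (auto simp: qN_eq_qreal_qnorm)
  have "odd p" "p > 0"
    using qnorm_odd_if_primary[OF \<open>primary c\<close> norm_c] prime_gt_0_int[OF assms(2)]
    by simp_all
  have norm_gcd: "qnorm d = of_int p" "d \<noteq> 0" if "left_gcd c P d" for d
    using qnorm_left_gcd_prime[OF c assms(2) norm_c] that \<open>p > 0\<close> qnorm_eq_0_iff[of d]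
    unfolding P_def by auto
  have "Hprime d" if "left_gcd c P d" for d
    using Hprime_if_prime_qnorm[of d "nat p"] norm_gcd[OF that] that assms(2) \<open>p > 0\<close>
    by (simp add: left_gcd_def)
  moreover obtain d where "left_gcd c P d"
    using left_gcd_exists[of c P] \<open>primary c\<close> \<open>p > 0\<close>
    by (auto simp: primary_def P_def H122_qreal_of_int)
  then obtain d' where "left_gcd c P d'" "primary d'"
    using primary_left_gcd_exists norm_gcd \<open>odd p\<close> by blast
  moreover have "d'' = d'" if "left_gcd c P d''" "primary d''" for d''
    using primary_left_gcd_unique \<open>left_gcd c P d'\<close> \<open>primary d'\<close> that norm_gcd by blast
  ultimately show ?thesis
    unfolding P_def by blast
qed

end
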